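(* Let $P>0$, $K\le N$, and for $\mathbf u\in\mathbb R^N$, $S\subseteq[N]$, $\mathbf p\in[0,P]^N$ let $Q(\mathbf u;S,\mathbf p)=\frac{\sum_{j\in S}p_je^{u_j}}{1+\sum_{j\in S}e^{u_j}}$, $q_i(S,\mathbf p|e^{\mathbf u})=\frac{e^{u_i}}{1+\sum_{j\in S}e^{u_j}}$ ($i\in S$) and $q_0(S,\mathbf p|e^{\mathbf u})=\frac1{1+\sum_{j\in S}e^{u_j}}$. (i) For any $(S,\mathbf p)\in\mathcal S_K\times[0,P]^N$ and $\mathbf u,\mathbf u'\in\mathbb R^N$, with $\mathbf w=\mathbf u'-\mathbf u$, $$|Q(\mathbf u';S,\mathbf p)-Q(\mathbf u;S,\mathbf p)|\le\sqrt{\sum_{j\in S}e^{u_j}|p_j-Q(\mathbf u;S,\mathbf p)|^2}\sqrt{\sum_{j\in S}q_j(S,\mathbf p|e^{\mathbf u})q_0(S,\mathbf p|e^{\mathbf u})w_j^2}+\frac32P\max_{j\in S}w_j^2.$$ (ii) Let $\mathbf u,\widetilde{\mathbf u}\in\mathbb R^N$ with $\widetilde{\mathbf u}\ge\mathbf u$ elementwise, let $(\widetilde S,\widetilde{\mathbf p})\in\operatorname{argmax}_{(S,\mathbf p)\in\mathcal S_K\times[0,P]^N}Q(\widetilde{\mathbf u};S,\mathbf p)$ and $\widetilde{\mathbf w}=\widetilde{\mathbf u}-\mathbf u$. Then $$|Q(\widetilde{\mathbf u};\widetilde S,\widetilde{\mathbf p})-Q(\mathbf u;\widetilde S,\widetilde{\mathbf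 p})|\le P\sqrt{\sum_{j\in\widetilde S}q_j(\widetilde S,\widetilde{\mathbf p}|e^{\widetilde{\mathbf u}})q_0(\widetilde S,\widetilde{\mathbf p}|e^{\widetilde{\mathbf u}})\widetilde w_j^2}+\frac32P\max_{j\in\widetilde S}\widetilde w_j^2.$$
   Context: $\mathcal S_K=\{S\subseteq[N]:|S|\le K\}$. The utility vector $\mathbf u$ is treated as a fixed vector, not depending on $\mathbf p$. *)

theory Defs
  imports Complex_Main
begin

text \<open>Items are indexed by [N] = {0..<N}; vectors in R^N are functions nat => real
  (only the values at indices < N matter).\<close>

definition assortments :: "nat \<Rightarrow> nat \<Rightarrow> nat set set" where
  "assortments N K = {S. S \<subseteq> {..<N} \<and> card S \<le> K}"

definition prices :: "nat \<Rightarrow> real \<Rightarrow> (nat \<Rightarrow> real) set" where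
  "prices N P = {p. \<forall>j<N. 0 \<le> p j \<and> p j \<le> P}"

definition Qrev :: "(nat \<Rightarrow> real) \<Rightarrow> nat set \<Rightarrow> (nat \<Rightarrow> real) \<Rightarrow> real" where
  "Qrev u S p = (\<Sum>j\<in>S. p j * exp (u j)) / (1 + (\<Sum>j\<in>S. exp (u j)))"

definition qi :: "nat set \<Rightarrow> (nat \<Rightarrow> real) \<Rightarrow> nat \<Rightarrow> real" where
  "qi S u i = exp (u i) / (1 + (\<Sum>j\<in>S. exp (u j)))"

definition q0 :: "nat set \<Rightarrow> (nat \<Rightarrow> real) \<Rightarrow> real" where
  "q0 S u = 1 / (1 + (\<Sum>j\<in>S. exp (u j)))"

text \<open>max over j in S of f j, with the convention that it is 0 for S empty
  (only applied to nonnegative f).\<close>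
definition maxS :: "nat set \<Rightarrow> (nat \<Rightarrow> real) \<Rightarrow> real" where
  "maxS S f = Max (insert 0 (f ` S))"

end

theory Submission
  imports Defs "HOL-Analysis.L2_Norm"
begin

text \<open>Along the segment u + t w the revenue g t = Qrev (u + t w) S p is the expectation of p
  under the MNL choice probabilities q_j(t), and the derivative of any such expectation E_t[f] is
  E_t[w f] - E_t[w] E_t[f]. Hence g' = E_t[w (p - g)] and g'' = E_t[w^2 (p - g)] - 2 E_t[w] g'.
  As the q_j sum to at most 1 and |p_j - g| \<le> P, this gives |g''| \<le> 3 P max_j w_j^2, so by
  Taylor's theorem (i) reduces to bounding g'(0), which is Cauchy-Schwarz after splitting
  q_j = sqrt(e^u_j) sqrt(e^u_j) / (1 + \<Sigma> e^u_k).

  For (ii), all prices of a revenue-maximising offer equal P, since raising a price below P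
  strictly increases the revenue; then the first factor in (i), expanded around ut, is at most P.\<close>

lemma second_order_Taylor_bound:
  fixes g g' g'' :: "real \<Rightarrow> real"
  assumes "\<And>t. 0 \<le> t \<Longrightarrow> t \<le> 1 \<Longrightarrow> (g has_real_derivative g' t) (at t)"
    and "\<And>t. 0 \<le> t \<Longrightarrow> t \<le> 1 \<Longrightarrow> (g' has_real_derivative g'' t) (at t)"
    and "\<And>t. 0 \<le> t \<Longrightarrow> t \<le> 1 \<Longrightarrow> \<bar>g'' t\<bar> \<le> C"
  shows "\<bar>g 1 - g 0 - g' 0\<bar> \<le> C / 2"
proof -
  define diff where "diff = (\<lambda>n::nat. if n = 0 then g else if n = 1 then g' else g'')"
  obtain t where t: "0 < t" "t < 1"
    and "g 1 = (\<Sum>n<2. diff n 0 / fact n * (1 - 0) ^ n) + diff 2 t / fact 2 * (1 - 0) ^ 2"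
    using Taylor_up[of 2 diff g 0 1 0] assms(1,2) unfolding diff_def by force
  then have remainder: "g 1 - g 0 - g' 0 = g'' t / 2"
    unfolding diff_def by (simp add: numeral_2_eq_2)
  show ?thesis unfolding remainder using assms(3)[of t] t by simp
qed

abbreviation ray :: "(nat \<Rightarrow> real) \<Rightarrow> (nat \<Rightarrow> real) \<Rightarrow> real \<Rightarrow> nat \<Rightarrow> real" where
  "ray u w t \<equiv> \<lambda>j. u j + t * w j"

lemma mnl_denominator_pos: "0 < 1 + (\<Sum>j\<in>S. exp (u j :: real))"
  by (simp add: add_pos_nonneg sum_nonneg less_imp_le)

lemma Qrev_eq_sum_qi: "Qrev u S f = (\<Sum>j\<in>S. qi S u j * f j)"
  unfolding Qrev_def qi_def by (simp add: sum_divide_distrib mult.commute)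

lemma qi_pos: "0 < qi S u j"
  unfolding qi_def using mnl_denominator_pos[of u S] by simp

lemma qi_nonneg: "0 \<le> qi S u j"
  using qi_pos less_imp_le by blast

lemma sum_qi_le_one: "(\<Sum>j\<in>S. qi S u j) \<le> 1"
  unfolding qi_def sum_divide_distrib[symmetric] using mnl_denominator_pos[of u S] by simp

lemma qi_mult_q0: "qi S u j * q0 S u = exp (u j) / (1 + (\<Sum>j\<in>S. exp (u j)))^2"
  unfolding qi_def q0_def by (simp add: power2_eq_square)

lemma Qrev_nonneg: "(\<And>j. j \<in> S \<Longrightarrow> 0 \<le> f j) \<Longrightarrow> 0 \<le> Qrev u S f"
  unfolding Qrev_eq_sum_qi by (intro sum_nonneg mult_nonneg_nonneg qi_nonneg) auto

lemma abs_Qrev_le: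
  assumes "0 \<le> B" and "\<And>j. j \<in> S \<Longrightarrow> \<bar>f j\<bar> \<le> B"
  shows "\<bar>Qrev u S f\<bar> \<le> B"
proof -
  have "\<bar>Qrev u S f\<bar> \<le> (\<Sum>j\<in>S. \<bar>qi S u j * f j\<bar>)"
    unfolding Qrev_eq_sum_qi by (rule sum_abs)
  also have "\<dots> = (\<Sum>j\<in>S. qi S u j * \<bar>f j\<bar>)"
    by (simp add: abs_mult abs_of_nonneg[OF qi_nonneg])
  also have "\<dots> \<le> (\<Sum>j\<in>S. qi S u j * B)"
    using assms(2) by (intro sum_mono mult_left_mono qi_nonneg) auto
  also have "\<dots> = B * (\<Sum>j\<in>S. qi S u j)"
    by (simp add: sum_distrib_left mult.commute)
  also have "\<dots> \<le> B"
    using sum_qi_le_one assms(1) by (rule mult_left_le)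
  finally show ?thesis .
qed

lemma abs_price_minus_Qrev_le:
  assumes "\<And>j. j \<in> S \<Longrightarrow> 0 \<le> p j \<and> p j \<le> P" and "i \<in> S"
  shows "\<bar>p i - Qrev u S p\<bar> \<le> P"
proof -
  have "0 \<le> Qrev u S p" using assms(1) by (intro Qrev_nonneg) auto
  moreover have "Qrev u S p \<le> P"
    using abs_Qrev_le[of P S p u] assms by force
  ultimately show ?thesis using assms(1)[OF assms(2)] by auto
qed

lemma Qrev_centered: "Qrev u S (\<lambda>j. f j * (p j - c)) = Qrev u S (\<lambda>j. f j * p j) - c * Qrev u S f"
  unfolding Qrev_eq_sum_qi by (simp add: sum_distrib_left sum_subtractf algebra_simps)

lemma has_real_derivative_Qrev_ray:
  "((\<lambda>t. Qrev (ray u w t) S f) has_real_derivative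
     Qrev (ray u w t) S (\<lambda>j. w j * f j) - Qrev (ray u w t) S w * Qrev (ray u w t) S f) (at t)"
proof -
  define D where "D = (\<lambda>t. 1 + (\<Sum>j\<in>S. exp (u j + t * w j)))"
  define A where "A = (\<lambda>g t. \<Sum>j\<in>S. g j * exp (u j + t * w j))"
  have Qrev_eq: "Qrev (ray u w t) S g = A g t / D t" for g t
    unfolding Qrev_def A_def D_def ..
  have dA: "(A g has_real_derivative A (\<lambda>j. w j * g j) t) (at t)" for g
    unfolding A_def by (auto intro!: derivative_eq_intros sum.cong)
  have dD: "(D has_real_derivative A w t) (at t)"
    unfolding D_def A_def by (auto intro!: derivative_eq_intros sum.cong)
  have "D t \<noteq> 0" unfolding D_def using mnl_denominator_pos by (metis less_irrefl)
  then show ?thesis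
    unfolding Qrev_eq by (auto intro!: derivative_eq_intros dA dD simp: field_simps power2_eq_square)
qed

lemma has_real_derivative_Qrev_ray_centered:
  "((\<lambda>t. Qrev (ray u w t) S p) has_real_derivative
     Qrev (ray u w t) S (\<lambda>j. w j * (p j - Qrev (ray u w t) S p))) (at t)"
  using has_real_derivative_Qrev_ray[of u w S p t] by (simp add: Qrev_centered mult.commute)

lemma has_real_derivative_Qrev_ray_centered_deriv:
  "((\<lambda>t. Qrev (ray u w t) S (\<lambda>j. w j * (p j - Qrev (ray u w t) S p))) has_real_derivative
     Qrev (ray u w t) S (\<lambda>j. (w j)^2 * (p j - Qrev (ray u w t) S p))
     - 2 * Qrev (ray u w t) S w * Qrev (ray u w t) S (\<lambda>j. w j * (p j - Qrev (ray u w t) S p)))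
   (at t)"
proof -
  define E where "E = (\<lambda>f. Qrev (ray u w t) S f)"
  have "((\<lambda>t. Qrev (ray u w t) S (\<lambda>j. w j * p j) - Qrev (ray u w t) S p * Qrev (ray u w t) S w)
      has_real_derivative
        (E (\<lambda>j. w j * (w j * p j)) - E w * E (\<lambda>j. w j * p j))
        - ((E (\<lambda>j. w j * p j) - E w * E p) * E w + (E (\<lambda>j. w j * w j) - E w * E w) * E p)) (at t)"
    unfolding E_def by (intro DERIV_diff DERIV_mult has_real_derivative_Qrev_ray)
  moreover have "(E (\<lambda>j. w j * (w j * p j)) - E w * E (\<lambda>j. w j * p j))
        - ((E (\<lambda>j. w j * p j) - E w * E p) * E w + (E (\<lambda>j. w j * w j) - E w * E w) * E p)
      = E (\<lambda>j. (w j)^2 * (p j - E p)) - 2 * E w * E (\<lambda>j. w j * (p j - E p))"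
    unfolding Qrev_centered E_def by (simp add: power2_eq_square algebra_simps)
  ultimately show ?thesis
    unfolding Qrev_centered E_def by simp
qed

lemma maxS_nonneg: "finite S \<Longrightarrow> 0 \<le> maxS S f"
  unfolding maxS_def by (simp add: Max_ge_iff)

lemma le_maxS: "finite S \<Longrightarrow> j \<in> S \<Longrightarrow> f j \<le> maxS S f"
  unfolding maxS_def by (simp add: Max_ge_iff)

lemma abs_Qrev_ray_second_deriv_le:
  fixes u w p :: "nat \<Rightarrow> real" and S :: "nat set"
  assumes "finite S" and "0 \<le> P" and price: "\<And>j. j \<in> S \<Longrightarrow> 0 \<le> p j \<and> p j \<le> P"
  defines "m \<equiv> maxS S (\<lambda>j. (w j)^2)"
  shows "\<bar>Qrev (ray u w t) S (\<lambda>j. (w j)^2 * (p j - Qrev (ray u w t) S p))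
     - 2 * Qrev (ray u w t) S w * Qrev (ray u w t) S (\<lambda>j. w j * (p j - Qrev (ray u w t) S p))\<bar>
     \<le> 3 * P * m"
proof -
  let ?E = "Qrev (ray u w t) S"
  have m: "0 \<le> m" "\<And>j. j \<in> S \<Longrightarrow> (w j)^2 \<le> m"
    unfolding m_def using maxS_nonneg[OF \<open>finite S\<close>] le_maxS[OF \<open>finite S\<close>] by auto
  have w: "\<bar>w j\<bar> \<le> sqrt m" if "j \<in> S" for j
    using real_sqrt_le_mono[OF m(2)[OF that]] by simp
  have dev: "\<bar>p j - ?E p\<bar> \<le> P" if "j \<in> S" for j
    using abs_price_minus_Qrev_le[OF price that] .
  have mean_sq: "\<bar>?E (\<lambda>j. (w j)^2 * (p j - ?E p))\<bar> \<le> m * P"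
    using m dev \<open>0 \<le> P\<close> by (intro abs_Qrev_le) (simp_all add: abs_mult mult_mono')
  have mean_w: "\<bar>?E w\<bar> \<le> sqrt m"
    using w m by (intro abs_Qrev_le) simp_all
  have first_deriv: "\<bar>?E (\<lambda>j. w j * (p j - ?E p))\<bar> \<le> sqrt m * P"
    using w dev m \<open>0 \<le> P\<close> by (intro abs_Qrev_le) (simp_all add: abs_mult mult_mono')
  have "\<bar>?E (\<lambda>j. (w j)^2 * (p j - ?E p)) - 2 * ?E w * ?E (\<lambda>j. w j * (p j - ?E p))\<bar>
      \<le> \<bar>?E (\<lambda>j. (w j)^2 * (p j - ?E p))\<bar> + 2 * (\<bar>?E w\<bar> * \<bar>?E (\<lambda>j. w j * (p j - ?E p))\<bar>)"
    by (rule order_trans[OF abs_triangle_ineq4]) (simp add: abs_mult)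
  also have "\<dots> \<le> m * P + 2 * (sqrt m * (sqrt m * P))"
    using mean_sq mult_mono'[OF mean_w first_deriv abs_ge_zero abs_ge_zero] by linarith
  also have "\<dots> = 3 * P * m" using m(1) by (simp add: algebra_simps)
  finally show ?thesis .
qed

lemma abs_Qrev_mult_le:
  "\<bar>Qrev u S (\<lambda>j. a j * b j)\<bar>
     \<le> sqrt (\<Sum>j\<in>S. exp (u j) * (a j)^2) * sqrt (\<Sum>j\<in>S. qi S u j * q0 S u * (b j)^2)"
proof -
  define D where "D = 1 + (\<Sum>j\<in>S. exp (u j))"
  define f where "f = (\<lambda>j. sqrt (exp (u j)) * a j)"
  define g where "g = (\<lambda>j. sqrt (exp (u j)) * b j / D)"
  have "qi S u j * (a j * b j) = f j * g j" for j
  proof -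
    have "sqrt (exp (u j)) * sqrt (exp (u j)) = exp (u j)" by simp
    then show ?thesis unfolding qi_def f_def g_def D_def[symmetric] by (metis times_divide_eq_left mult.assoc mult.left_commute)
  qed
  then have "\<bar>Qrev u S (\<lambda>j. a j * b j)\<bar> = \<bar>\<Sum>j\<in>S. f j * g j\<bar>"
    unfolding Qrev_eq_sum_qi by simp
  also have "\<dots> \<le> (\<Sum>j\<in>S. \<bar>f j\<bar> * \<bar>g j\<bar>)"
    unfolding abs_mult[symmetric] by (rule sum_abs)
  also have "\<dots> \<le> L2_set f S * L2_set g S"
    by (rule L2_set_mult_ineq)
  also have "L2_set f S = sqrt (\<Sum>j\<in>S. exp (u j) * (a j)^2)"
    unfolding L2_set_def f_def by (simp add: power_mult_distrib)
  also have "L2_set g S = sqrt (\<Sum>j\<in>S. qi S u j * q0 S u * (b j)^2)"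
    unfolding L2_set_def g_def qi_mult_q0 D_def
    by (simp add: power_mult_distrib power_divide)
  finally show ?thesis .
qed

lemma Qrev_perturbation_le:
  fixes u u' p :: "nat \<Rightarrow> real"
  assumes "finite S" and "0 \<le> P" and price: "\<And>j. j \<in> S \<Longrightarrow> 0 \<le> p j \<and> p j \<le> P"
  shows "\<bar>Qrev u' S p - Qrev u S p\<bar>
    \<le> sqrt (\<Sum>j\<in>S. exp (u j) * \<bar>p j - Qrev u S p\<bar>^2)
        * sqrt (\<Sum>j\<in>S. qi S u j * q0 S u * (u' j - u j)^2)
      + 3/2 * P * maxS S (\<lambda>j. (u' j - u j)^2)"
proof -
  define w where "w = (\<lambda>j. u' j - u j)"
  define g where "g = (\<lambda>t. Qrev (ray u w t) S p)"
  define g' where "g' = (\<lambda>t. Qrev (ray u w t) S (\<lambda>j. w j * (p j - g t)))"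
  define g'' where "g'' = (\<lambda>t. Qrev (ray u w t) S (\<lambda>j. (w j)^2 * (p j - g t))
    - 2 * Qrev (ray u w t) S w * g' t)"
  have "\<bar>g 1 - g 0 - g' 0\<bar> \<le> 3 * P * maxS S (\<lambda>j. (w j)^2) / 2"
  proof (rule second_order_Taylor_bound)
    show "(g has_real_derivative g' t) (at t)" for t
      unfolding g_def g'_def by (rule has_real_derivative_Qrev_ray_centered)
    show "(g' has_real_derivative g'' t) (at t)" for t
      unfolding g_def g'_def g''_def by (rule has_real_derivative_Qrev_ray_centered_deriv)
    show "\<bar>g'' t\<bar> \<le> 3 * P * maxS S (\<lambda>j. (w j)^2)" for t
      unfolding g''_def g'_def g_def using assms by (rule abs_Qrev_ray_second_deriv_le)
  qed
  moreover have "g 1 = Qrev u' S p" "g 0 = Qrev u S p"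
    unfolding g_def w_def by simp_all
  moreover have "\<bar>g' 0\<bar> \<le> sqrt (\<Sum>j\<in>S. exp (u j) * \<bar>p j - Qrev u S p\<bar>^2)
      * sqrt (\<Sum>j\<in>S. qi S u j * q0 S u * (w j)^2)"
    using abs_Qrev_mult_le[of u S "\<lambda>j. p j - Qrev u S p" w]
    unfolding g'_def g_def by (simp add: mult.commute)
  ultimately show ?thesis
    unfolding w_def by linarith
qed

lemma Qrev_fun_upd:
  assumes "finite S" and "j \<in> S"
  shows "Qrev u S (p(j := x)) = Qrev u S p + (x - p j) * qi S u j"
proof -
  have "(\<Sum>i\<in>S. qi S u i * (p(j := x)) i) = (\<Sum>i\<in>S. qi S u i * p i + (if i = j then (x - p j) * qi S u i else 0))"
    by (intro sum.cong) (auto simp: algebra_simps)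
  then show ?thesis
    unfolding Qrev_eq_sum_qi using assms by (simp add: sum.distrib)
qed

lemma price_eq_max_if_Qrev_maximal:
  assumes "finite S" and "S \<subseteq> {..<N}" and "pt \<in> prices N P"
    and max: "\<forall>p\<in>prices N P. Qrev u S p \<le> Qrev u S pt" and "j \<in> S"
  shows "pt j = P"
proof (rule ccontr)
  assume "pt j \<noteq> P"
  moreover have "j < N" and "pt j \<le> P" using assms(2,3,5) unfolding prices_def by auto
  ultimately have "pt j < P" by simp
  then have "pt(j := P) \<in> prices N P" using assms(3) unfolding prices_def by auto
  with max have "Qrev u S (pt(j := P)) \<le> Qrev u S pt" by blast
  moreover have "0 < (P - pt j) * qi S u j" using \<open>pt j < P\<close> qi_pos by simp
  ultimately show False unfolding Qrev_fun_upd[OF assms(1,5)] by linarith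
qed

lemma sqrt_sum_exp_price_dev_le_uniform_price:
  assumes "0 \<le> P" and uniform: "\<And>j. j \<in> S \<Longrightarrow> p j = P"
  shows "sqrt (\<Sum>j\<in>S. exp (u j) * \<bar>p j - Qrev u S p\<bar>^2) \<le> P"
proof -
  define s where "s = (\<Sum>j\<in>S. exp (u j))"
  have "0 \<le> s" unfolding s_def by (simp add: sum_nonneg less_imp_le)
  have "Qrev u S p = P * s / (1 + s)"
    unfolding Qrev_def s_def using uniform by (simp add: sum_distrib_left)
  then have dev: "p j - Qrev u S p = P / (1 + s)" if "j \<in> S" for j
    using uniform[OF that] \<open>0 \<le> s\<close> by (simp add: field_simps)
  have "(\<Sum>j\<in>S. exp (u j) * \<bar>p j - Qrev u S p\<bar>^2) = (\<Sum>j\<in>S. exp (u j) * (P / (1 + s))^2)"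
    by (intro sum.cong refl) (simp only: power2_abs dev)
  also have "\<dots> = P^2 * (s / (1 + s)^2)"
    unfolding s_def sum_distrib_right[symmetric] by (simp add: power_divide)
  also have "\<dots> \<le> P^2"
  proof (rule mult_left_le)
    have "s \<le> (1 + s)^2" using \<open>0 \<le> s\<close> by (simp add: power2_eq_square algebra_simps)
    then show "s / (1 + s)^2 \<le> 1" using \<open>0 \<le> s\<close> by (simp add: divide_le_eq)
  qed simp
  finally show ?thesis using assms(1) by (simp add: real_le_lsqrt)
qed

lemma Qrev_perturbation_le_uniform_price:
  fixes u v p :: "nat \<Rightarrow> real"
  assumes "finite S" and "0 \<le> P" and uniform: "\<And>j. j \<in> S \<Longrightarrow> p j = P"
  shows "\<bar>Qrev u S p - Qrev v S p\<bar>
    \<le> P * sqrt (\<Sum>j\<in>S. qi S u j * q0 S u * (u j - v j)^2)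
      + 3/2 * P * maxS S (\<lambda>j. (u j - v j)^2)"
proof -
  define W where "W = sqrt (\<Sum>j\<in>S. qi S u j * q0 S u * (u j - v j)^2)"
  have "\<bar>Qrev u S p - Qrev v S p\<bar>
      \<le> sqrt (\<Sum>j\<in>S. exp (u j) * \<bar>p j - Qrev u S p\<bar>^2) * W
        + 3/2 * P * maxS S (\<lambda>j. (u j - v j)^2)"
    using Qrev_perturbation_le[OF assms(1,2), of p v u] uniform assms(2)
    unfolding W_def by (simp add: power2_commute[of "v _"] abs_minus_commute)
  moreover have "sqrt (\<Sum>j\<in>S. exp (u j) * \<bar>p j - Qrev u S p\<bar>^2) * W \<le> P * W"
  proof (rule mult_right_mono)
    show "sqrt (\<Sum>j\<in>S. exp (u j) * \<bar>p j - Qrev u S p\<bar>^2) \<le> P"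
      using assms(2) uniform by (rule sqrt_sum_exp_price_dev_le_uniform_price)
    show "0 \<le> W"
      unfolding W_def by (intro real_sqrt_ge_zero sum_nonneg) (simp add: qi_mult_q0)
  qed
  ultimately show ?thesis
    unfolding W_def by linarith
qed

theorem propositionC2:
  fixes P :: real and K N :: nat
  assumes "P > 0" and "K \<le> N"
  shows
   "(\<forall>S p u u'. S \<in> assortments N K \<longrightarrow> p \<in> prices N P \<longrightarrow>
      (let w = (\<lambda>j. u' j - u j) in
        \<bar>Qrev u' S p - Qrev u S p\<bar>
          \<le> sqrt (\<Sum>j\<in>S. exp (u j) * \<bar>p j - Qrev u S p\<bar>^2)
              * sqrt (\<Sum>j\<in>S. qi S u j * q0 S u * (w j)^2)
            + 3/2 * P * maxS S (\<lambda>j. (w j)^2)))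
    \<and>
    (\<forall>u ut St pt. (\<forall>j<N. u j \<le> ut j) \<longrightarrow>
       St \<in> assortments N K \<longrightarrow> pt \<in> prices N P \<longrightarrow>
       (\<forall>S\<in>assortments N K. \<forall>p\<in>prices N P. Qrev ut S p \<le> Qrev ut St pt) \<longrightarrow>
      (let wt = (\<lambda>j. ut j - u j) in
        \<bar>Qrev ut St pt - Qrev u St pt\<bar>
          \<le> P * sqrt (\<Sum>j\<in>St. qi St ut j * q0 St ut * (wt j)^2)
            + 3/2 * P * maxS St (\<lambda>j. (wt j)^2)))"
proof -
  have finite: "finite S" if "S \<in> assortments N K" for S
    using that unfolding assortments_def by (auto intro: finite_subset)
  have price: "0 \<le> p j" "p j \<le> P" if "S \<in> assortments N K" "p \<in> prices N P" "j \<in> S" for S p j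
    using that unfolding assortments_def prices_def by auto
  have optimal_price: "pt j = P"
    if "St \<in> assortments N K" "pt \<in> prices N P" "j \<in> St"
      and "\<forall>S\<in>assortments N K. \<forall>p\<in>prices N P. Qrev ut S p \<le> Qrev ut St pt"
    for ut St pt j
    using that finite[OF that(1)] price_eq_max_if_Qrev_maximal[of St N pt P ut j]
    unfolding assortments_def by blast
  show ?thesis
    unfolding Let_def
    by (intro conjI allI impI; rule Qrev_perturbation_le Qrev_perturbation_le_uniform_price)
      (use \<open>P > 0\<close> in \<open>auto intro: finite price optimal_price\<close>)
qed

end
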